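(* Let $\Sigma(B)\subset\Sigma(C)\subset(\mathbb{N}^* )^{\mathbb{Z}}$ be two transitive and symmetric subshifts of finite type. Let $x\in\mathbb{R}$ be such that $m(\beta)\le x$ for all $\beta\in\Sigma(B)$. Suppose that $\gamma\in\Sigma(C)$ satisfies $m(\gamma)=\lambda_0(\gamma)=m>x$ and that $\gamma$ connects both positively and negatively to $B$. Then $m\in L$.
   Context: $\mathbb{N}^*$ denotes the positive integers. For $\underline a=(a_n)_{n\in\mathbb{Z}}\in(\mathbb{N}^* )^{\mathbb{Z}}$: $\lambda_0(\underline a)=[a_0;a_1,a_2,\dots]+[0;a_{-1},a_{-2},\dots]$; $\sigma$ is the left shift; $m(\underline a)=\sup_{n\in\mathbb{Z}}\lambda_0(\sigma^n\underline a)$ (Markov value), $\ell(\underline a)=\limsup_{n\to\infty}\lambda_0(\sigma^n\underline a)$ (Lagrange value); $L=\{\ell(\underline a):\underline a\in(\mathbb{N}^* )^{\mathbb{Z}}\}$ is the Lagrange spectrum. For a subshift $\Sigma(A)\subset(\mathbb{N}^* )^{\mathbb{Z}}$, let $\Sigma^+(A)$ be the set of one-sided sequences $(\theta_1,\theta_2,\dots)$ with $(\theta_n)_{n\in\mathbb{Z}}\in\Sigma(A)$, $K(A)=\{[0;\theta_1,\theta_2,\dots]:(\theta_n)\in\Sigma(A)\}$ and $K^-(A)=\{[0;\theta_{-1},\theta_{-2},\dots]:(\theta_n)\in\Sigma(A)\}$; the subshift is called symmetric if $K(A)=K^-(A)$. A sequence $\alpha\in\Sigma(C)$ with $m(\alpha)=\lambda_0(\alpha)$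 connects positively to $B$ if for every $k\in\mathbb{N}$ there exist a finite word $\tau$ and $\upsilon\in\Sigma^+(B)$ such that the bi-infinite sequence $\tilde\alpha:=\dots\alpha_{-2}\alpha_{-1}\alpha_0\dots\alpha_k\tau\upsilon$ (which agrees with $\alpha$ at indices $\le k$ and is followed by $\tau$ and then $\upsilon$) satisfies $m(\tilde\alpha)<m(\alpha)+2^{-k}$. It connects negatively to $B$ if the reversed sequence $\alpha^t=(\alpha_{-n})_{n\in\mathbb{Z}}$ connects positively to $B$. *)

theory Defs
  imports Complex_Main "HOL-Library.Liminf_Limsup" "HOL-Library.Extended_Real"
begin

type_synonym bseq = "int \<Rightarrow> nat"

fun cfrac_fin :: "nat \<Rightarrow> (nat \<Rightarrow> nat) \<Rightarrow> real" where
  "cfrac_fin 0 a = real (a 0)"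
| "cfrac_fin (Suc n) a = real (a 0) + 1 / cfrac_fin n (\<lambda>k. a (Suc k))"

definition cfrac :: "(nat \<Rightarrow> nat) \<Rightarrow> real" where
  "cfrac a = lim (\<lambda>n. cfrac_fin n a)"

text \<open>[0; a1, a2, ...] = 1 / [a1; a2, ...].\<close>
definition cfrac0 :: "(nat \<Rightarrow> nat) \<Rightarrow> real" where
  "cfrac0 a = 1 / cfrac a"

definition positive_seq :: "bseq \<Rightarrow> bool" where
  "positive_seq \<theta> \<longleftrightarrow> (\<forall>n. \<theta> n \<ge> 1)"

definition lambda0 :: "bseq \<Rightarrow> real" where
  "lambda0 \<theta> = cfrac (\<lambda>k. \<theta> (int k)) + cfrac0 (\<lambda>k. \<theta> (- int k - 1))"

definition shiftn :: "int \<Rightarrow> bseq \<Rightarrow> bseq" where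
  "shiftn n \<theta> = (\<lambda>k. \<theta> (k + n))"

definition markov :: "bseq \<Rightarrow> ereal" where
  "markov \<theta> = (SUP n::int. ereal (lambda0 (shiftn n \<theta>)))"

definition lagrange :: "bseq \<Rightarrow> ereal" where
  "lagrange \<theta> = limsup (\<lambda>n::nat. ereal (lambda0 (shiftn (int n) \<theta>)))"

definition lagrange_spectrum :: "real set" where
  "lagrange_spectrum = {l. \<exists>\<theta>. positive_seq \<theta> \<and> lagrange \<theta> = ereal l}"

definition sft :: "bseq set \<Rightarrow> bool" where
  "sft S \<longleftrightarrow> (\<exists>N::nat. \<exists>W :: nat list set. N \<ge> 1 \<and> finite W \<and>
      (\<forall>w\<in>W. \<forall>c\<in>set w. c \<ge> 1) \<and>
      S = {\<theta>. \<forall>n::int. map (\<lambda>i. \<theta> (n + int i)) [0..<N] \<in> W})"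

text \<open>Topological transitivity: any admissible word can be followed (later) by any
  other admissible word within one sequence of the subshift.\<close>
definition transitive_shift :: "bseq set \<Rightarrow> bool" where
  "transitive_shift S \<longleftrightarrow> (\<forall>\<theta>1\<in>S. \<forall>\<theta>2\<in>S. \<forall>a b :: int. \<forall>k::nat.
      \<exists>\<theta>\<in>S. \<exists>p::int. p \<ge> int k \<and>
        (\<forall>i<k. \<theta> (int i) = \<theta>1 (a + int i)) \<and> (\<forall>i<k. \<theta> (p + int i) = \<theta>2 (b + int i)))"

definition Kplus :: "bseq set \<Rightarrow> real set" where
  "Kplus S = {cfrac0 (\<lambda>k. \<theta> (int k)) | \<theta>. \<theta> \<in> S}"

definition Kminus :: "bseq set \<Rightarrow> real set" where
  "Kminus S = {cfrac0 (\<lambda>k. \<theta> (- int k)) | \<theta>. \<theta> \<in> S}"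

text \<open>Note cfrac0 a = [0; a_1, a_2, ...] only reads a_1, a_2, ..., so Kplus uses
  theta_1, theta_2, ... and Kminus uses theta_{-1}, theta_{-2}, ...\<close>
definition symmetric_shift :: "bseq set \<Rightarrow> bool" where
  "symmetric_shift S \<longleftrightarrow> Kplus S = Kminus S"

text \<open>One-sided sequences (theta_1, theta_2, ...), stored with index shifted to start at 0.\<close>
definition Sigma_plus :: "bseq set \<Rightarrow> (nat \<Rightarrow> nat) set" where
  "Sigma_plus S = {(\<lambda>i. \<theta> (int i + 1)) | \<theta>. \<theta> \<in> S}"

text \<open>The sequence ... alpha_{k-1} alpha_k tau upsilon.\<close>
definition glue :: "bseq \<Rightarrow> nat \<Rightarrow> nat list \<Rightarrow> (nat \<Rightarrow> nat) \<Rightarrow> bseq" where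
  "glue \<alpha> k \<tau> \<upsilon> = (\<lambda>n. if n \<le> int k then \<alpha> n
      else if n \<le> int k + int (length \<tau>) then \<tau> ! nat (n - int k - 1)
      else \<upsilon> (nat (n - int k - int (length \<tau>) - 1)))"

definition connects_pos :: "bseq \<Rightarrow> bseq set \<Rightarrow> bool" where
  "connects_pos \<alpha> B \<longleftrightarrow> (\<forall>k::nat. \<exists>\<tau> \<upsilon>. (\<forall>c\<in>set \<tau>. c \<ge> 1) \<and> \<upsilon> \<in> Sigma_plus B \<and>
      markov (glue \<alpha> k \<tau> \<upsilon>) < markov \<alpha> + ereal ((1/2) ^ k))"

definition transpose_seq :: "bseq \<Rightarrow> bseq" where
  "transpose_seq \<alpha> = (\<lambda>n. \<alpha> (- n))"

definition connects_neg :: "bseq \<Rightarrow> bseq set \<Rightarrow> bool" where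
  "connects_neg \<alpha> B \<longleftrightarrow> connects_pos (transpose_seq \<alpha>) B"

end

theory Submission
  imports Defs
begin

(*
  The connections of gamma to B give, for every k, sequences P_k and N_k that agree with gamma
  on [..k] resp. [-k..], continue with a sequence of B, and have Markov value below m + 2^-k.
  By symmetry of B the left tail of N_k is read off a sequence of B as well, so transitivity
  of B bridges the tail of P_k to the tail of N_(k+1) by a sequence J_k of B, whose Markov value
  is at most x < m. Splicing N_k, P_k, J_k for k = 1, 2, ... with overlaps of radius k yields a
  sequence in which every late position sees a long window of a single piece. Since lambda_0
  changes by O(2^-w) when only digits at distance > w change, the lambda_0 values of the
  spliced sequence are eventually below m + o(1), and at the copies of the centre of gamma they
  tend to m. So its Lagrange value is m.
*)

section \<open>Continued fractions\<close>

definition pos_quotients :: "(nat \<Rightarrow> nat) \<Rightarrow> bool" where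
  "pos_quotients a \<longleftrightarrow> (\<forall>i. 1 \<le> a i)"

lemma pos_quotients_tl: "pos_quotients a \<Longrightarrow> pos_quotients (\<lambda>i. a (Suc i))"
  by (simp add: pos_quotients_def)

lemma cfrac_fin_ge_1: "pos_quotients a \<Longrightarrow> 1 \<le> cfrac_fin n a"
proof (induction n arbitrary: a)
  case 0
  then show ?case by (simp add: pos_quotients_def)
next
  case (Suc n)
  have "1 \<le> real (a 0)" using Suc.prems by (simp add: pos_quotients_def)
  moreover have "0 < 1 / cfrac_fin n (\<lambda>i. a (Suc i))"
    using Suc pos_quotients_tl by fastforce
  ultimately show ?case by (simp only: cfrac_fin.simps)
qed

lemma inverse_add_inverse_contract:
  fixes c X Y :: real
  assumes "1 \<le> c" "1 \<le> X" "1 \<le> Y"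
  shows "\<bar>1 / (c + 1 / X) - 1 / (c + 1 / Y)\<bar> \<le> \<bar>X - Y\<bar> / 4"
proof -
  have X: "2 \<le> c * X + 1" and Y: "2 \<le> c * Y + 1"
    using assms mult_mono[of 1 c 1 X] mult_mono[of 1 c 1 Y] by simp_all
  have "1 / (c + 1 / X) - 1 / (c + 1 / Y) = (X - Y) / ((c * X + 1) * (c * Y + 1))"
    using assms X Y by (simp add: field_simps)
  also have "\<bar>\<dots>\<bar> = \<bar>X - Y\<bar> / ((c * X + 1) * (c * Y + 1))"
    using X Y by (simp add: abs_divide abs_mult)
  also have "\<dots> \<le> \<bar>X - Y\<bar> / 4"
    using mult_mono[OF X Y] X Y by (intro divide_left_mono) auto
  finally show ?thesis .
qed

lemma inverse_cfrac_fin_contract: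
  assumes "pos_quotients a" "pos_quotients b" "a 0 = b 0" "a 1 = b 1"
  shows "\<bar>1 / cfrac_fin (Suc (Suc p)) a - 1 / cfrac_fin (Suc (Suc q)) b\<bar>
    \<le> \<bar>1 / cfrac_fin p (\<lambda>i. a (Suc (Suc i))) - 1 / cfrac_fin q (\<lambda>i. b (Suc (Suc i)))\<bar> / 4"
proof -
  let ?x = "1 / cfrac_fin p (\<lambda>i. a (Suc (Suc i)))" and ?y = "1 / cfrac_fin q (\<lambda>i. b (Suc (Suc i)))"
  have tl2: "pos_quotients (\<lambda>i. a (Suc (Suc i)))" "pos_quotients (\<lambda>i. b (Suc (Suc i)))"
    using assms(1,2) by (simp_all add: pos_quotients_def)
  have "1 \<le> real (a 1)"
    using assms(1) by (simp add: pos_quotients_def)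
  moreover have "0 < ?x" "0 < ?y"
    using cfrac_fin_ge_1[OF tl2(1), of p] cfrac_fin_ge_1[OF tl2(2), of q] by simp_all
  ultimately have "1 \<le> a 1 + ?x" "1 \<le> a 1 + ?y"
    by linarith+
  then show ?thesis
    using inverse_add_inverse_contract[of "a 0" "a 1 + ?x" "a 1 + ?y"] assms
    by (simp add: pos_quotients_def)
qed

text \<open>A single level of a continued fraction need not contract differences at all, hence
  the induction in steps of two.\<close>
lemma inverse_cfrac_fin_close:
  assumes "pos_quotients a" "pos_quotients b" "\<forall>i<n. a i = b i" "n \<le> p" "n \<le> q"
  shows "\<bar>1 / cfrac_fin p a - 1 / cfrac_fin q b\<bar> \<le> 2 * (1/2) ^ n"
  using assms
proof (induction n arbitrary: a b p q rule: less_induct)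
  case (less n)
  show ?case
  proof (cases "n \<le> 1")
    case True
    have "1 \<le> cfrac_fin p a" "1 \<le> cfrac_fin q b"
      using less.prems cfrac_fin_ge_1 by blast+
    then have "0 < 1 / cfrac_fin p a" "1 / cfrac_fin p a \<le> 1"
      "0 < 1 / cfrac_fin q b" "1 / cfrac_fin q b \<le> 1" by simp_all
    then have "\<bar>1 / cfrac_fin p a - 1 / cfrac_fin q b\<bar> \<le> 1"
      by linarith
    also have "1 \<le> 2 * (1/2::real) ^ n"
      using True by (cases n) simp_all
    finally show ?thesis .
  next
    case False
    define p' q' where "p' = p - 2" and "q' = q - 2"
    have pq: "p = Suc (Suc p')" "q = Suc (Suc q')"
      using False less.prems(4,5) by (simp_all add: p'_def q'_def)
    have "\<bar>1 / cfrac_fin p' (\<lambda>i. a (Suc (Suc i))) - 1 / cfrac_fin q' (\<lambda>i. b (Suc (Suc i)))\<bar>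
        \<le> 2 * (1/2) ^ (n - 2)"
      using False less.prems pq by (intro less.IH) (simp_all add: pos_quotients_def)
    moreover have "\<bar>1 / cfrac_fin p a - 1 / cfrac_fin q b\<bar>
        \<le> \<bar>1 / cfrac_fin p' (\<lambda>i. a (Suc (Suc i))) - 1 / cfrac_fin q' (\<lambda>i. b (Suc (Suc i)))\<bar> / 4"
      unfolding pq using False less.prems(1-3) by (intro inverse_cfrac_fin_contract) auto
    ultimately show ?thesis
      using False by (simp add: power_diff power2_eq_square)
  qed
qed

lemma eventually_half_pow_less:
  fixes c e :: real
  assumes "0 < e"
  shows "\<forall>\<^sub>F n in sequentially. c * (1/2) ^ n < e"
proof -
  have "(\<lambda>n. c * (1/2::real) ^ n) \<longlonglongrightarrow> 0"
    by (intro tendsto_mult_right_zero LIMSEQ_power_zero) simp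
  then show ?thesis
    using assms by (rule order_tendstoD)
qed

lemma cfrac_fin_LIMSEQ:
  assumes "pos_quotients a"
  shows "(\<lambda>n. cfrac_fin n a) \<longlonglongrightarrow> cfrac a"
proof -
  let ?g = "\<lambda>n. 1 / cfrac_fin n (\<lambda>i. a (Suc i))"
  have "Cauchy ?g"
  proof (rule CauchyI)
    fix e :: real
    assume "0 < e"
    then obtain M where M: "2 * (1/2) ^ M < e"
      using eventually_half_pow_less[of e 2] by (auto simp: eventually_sequentially)
    have "norm (?g m - ?g n) < e" if "M \<le> m" "M \<le> n" for m n
      using inverse_cfrac_fin_close[OF pos_quotients_tl pos_quotients_tl _ that] assms M
      by fastforce
    then show "\<exists>M. \<forall>m\<ge>M. \<forall>n\<ge>M. norm (?g m - ?g n) < e"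
      by blast
  qed
  then obtain L where "?g \<longlonglongrightarrow> L"
    by (auto simp: Cauchy_convergent_iff convergent_def)
  then have "(\<lambda>n. cfrac_fin (Suc n) a) \<longlonglongrightarrow> a 0 + L"
    by (auto intro: tendsto_intros)
  then have "convergent (\<lambda>n. cfrac_fin n a)"
    using LIMSEQ_imp_Suc convergent_def by blast
  then show ?thesis
    unfolding cfrac_def by (simp add: convergent_LIMSEQ_iff)
qed

lemma cfrac_ge_1: "pos_quotients a \<Longrightarrow> 1 \<le> cfrac a"
  by (rule LIMSEQ_le_const[OF cfrac_fin_LIMSEQ]) (auto intro: cfrac_fin_ge_1)

lemma cfrac0_LIMSEQ: "pos_quotients a \<Longrightarrow> (\<lambda>n. 1 / cfrac_fin n a) \<longlonglongrightarrow> cfrac0 a"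
  unfolding cfrac0_def using cfrac_ge_1
  by (intro tendsto_divide tendsto_const cfrac_fin_LIMSEQ) fastforce+

lemma cfrac_Suc: "pos_quotients a \<Longrightarrow> cfrac a = a 0 + cfrac0 (\<lambda>i. a (Suc i))"
proof -
  assume a: "pos_quotients a"
  have "(\<lambda>n. cfrac_fin (Suc n) a) \<longlonglongrightarrow> a 0 + cfrac0 (\<lambda>i. a (Suc i))"
    using cfrac0_LIMSEQ[OF pos_quotients_tl[OF a]] by (auto intro: tendsto_intros)
  moreover have "(\<lambda>n. cfrac_fin (Suc n) a) \<longlonglongrightarrow> cfrac a"
    using a by (intro LIMSEQ_Suc cfrac_fin_LIMSEQ)
  ultimately show ?thesis
    using LIMSEQ_unique by metis
qed

lemma cfrac0_pos: "pos_quotients a \<Longrightarrow> 0 < cfrac0 a"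
  using cfrac_ge_1 by (fastforce simp: cfrac0_def)

lemma cfrac_gt_1:
  assumes "pos_quotients a"
  shows "1 < cfrac a"
proof -
  have "1 \<le> real (a 0)"
    using assms by (simp add: pos_quotients_def)
  moreover have "0 < cfrac0 (\<lambda>i. a (Suc i))"
    using assms by (intro cfrac0_pos pos_quotients_tl)
  ultimately show ?thesis
    using cfrac_Suc[OF assms] by linarith
qed

lemma floor_cfrac: "pos_quotients a \<Longrightarrow> \<lfloor>cfrac a\<rfloor> = a 0"
proof -
  assume a: "pos_quotients a"
  have "0 < cfrac0 (\<lambda>i. a (Suc i))" "cfrac0 (\<lambda>i. a (Suc i)) < 1"
    using cfrac0_pos cfrac_gt_1 pos_quotients_tl[OF a] by (auto simp: cfrac0_def)
  then show ?thesis
    unfolding cfrac_Suc[OF a] by (simp add: floor_eq_iff)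
qed

lemma cfrac_inj:
  assumes "pos_quotients a" "pos_quotients b" "cfrac a = cfrac b"
  shows "a = b"
proof
  fix n
  show "a n = b n"
    using assms
  proof (induction n arbitrary: a b)
    case 0
    then show ?case
      using floor_cfrac by (metis of_nat_eq_iff)
  next
    case (Suc n)
    have "a 0 = b 0"
      using Suc.prems floor_cfrac by (metis of_nat_eq_iff)
    then have "cfrac (\<lambda>i. a (Suc i)) = cfrac (\<lambda>i. b (Suc i))"
      using Suc.prems cfrac_Suc by (simp add: cfrac0_def)
    then show ?case
      using Suc.IH[of "\<lambda>i. a (Suc i)" "\<lambda>i. b (Suc i)"] Suc.prems pos_quotients_tl by blast
  qed
qed

lemma cfrac0_inj: "pos_quotients a \<Longrightarrow> pos_quotients b \<Longrightarrow> cfrac0 a = cfrac0 b \<Longrightarrow> a = b"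
  by (rule cfrac_inj) (simp_all add: cfrac0_def)

lemma cfrac0_close:
  assumes "pos_quotients a" "pos_quotients b" "\<forall>i<n. a i = b i"
  shows "\<bar>cfrac0 a - cfrac0 b\<bar> \<le> 2 * (1/2) ^ n"
proof (rule LIMSEQ_le_const2)
  show "(\<lambda>p. \<bar>1 / cfrac_fin p a - 1 / cfrac_fin p b\<bar>) \<longlonglongrightarrow> \<bar>cfrac0 a - cfrac0 b\<bar>"
    using assms by (intro tendsto_intros cfrac0_LIMSEQ)
  show "\<exists>N. \<forall>p\<ge>N. \<bar>1 / cfrac_fin p a - 1 / cfrac_fin p b\<bar> \<le> 2 * (1/2) ^ n"
    using assms inverse_cfrac_fin_close by blast
qed

section \<open>The values lambda0 and Markov values\<close>

lemma positive_seq_pos_quotients: "positive_seq \<theta> \<Longrightarrow> pos_quotients (\<lambda>k. \<theta> (f k))"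
  by (simp add: positive_seq_def pos_quotients_def)

lemma positive_seq_shiftn: "positive_seq \<theta> \<Longrightarrow> positive_seq (shiftn n \<theta>)"
  by (simp add: positive_seq_def shiftn_def)

lemma positive_seq_transpose_seq: "positive_seq \<theta> \<Longrightarrow> positive_seq (transpose_seq \<theta>)"
  by (simp add: positive_seq_def transpose_seq_def)

lemma lambda0_eq_cfrac0:
  assumes "positive_seq \<theta>"
  shows "lambda0 \<theta> = \<theta> 0 + cfrac0 (\<lambda>k. \<theta> (int k + 1)) + cfrac0 (\<lambda>k. \<theta> (- int k - 1))"
  using cfrac_Suc[OF positive_seq_pos_quotients[OF assms, of int]]
  by (simp add: lambda0_def add.commute)

lemma lambda0_close:
  assumes "positive_seq \<theta>" "positive_seq \<theta>'" "\<forall>t. \<bar>t\<bar> \<le> int w \<longrightarrow> \<theta> t = \<theta>' t"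
  shows "\<bar>lambda0 \<theta> - lambda0 \<theta>'\<bar> \<le> 4 * (1/2) ^ w"
proof -
  have "\<bar>cfrac0 (\<lambda>k. \<theta> (int k + 1)) - cfrac0 (\<lambda>k. \<theta>' (int k + 1))\<bar> \<le> 2 * (1/2) ^ w"
    "\<bar>cfrac0 (\<lambda>k. \<theta> (- int k - 1)) - cfrac0 (\<lambda>k. \<theta>' (- int k - 1))\<bar> \<le> 2 * (1/2) ^ w"
    using assms by (auto intro!: cfrac0_close positive_seq_pos_quotients)
  moreover have "\<theta> 0 = \<theta>' 0"
    using assms(3) by simp
  ultimately show ?thesis
    unfolding lambda0_eq_cfrac0[OF assms(1)] lambda0_eq_cfrac0[OF assms(2)] by linarith
qed

lemma lambda0_shiftn_close:
  assumes "positive_seq \<theta>" "positive_seq \<theta>'" "\<forall>t. \<bar>t - n\<bar> \<le> int w \<longrightarrow> \<theta> t = \<theta>' t"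
  shows "\<bar>lambda0 (shiftn n \<theta>) - lambda0 (shiftn n \<theta>')\<bar> \<le> 4 * (1/2) ^ w"
  using assms by (intro lambda0_close positive_seq_shiftn) (auto simp: shiftn_def)

lemma shiftn_shiftn [simp]: "shiftn a (shiftn b \<theta>) = shiftn (a + b) \<theta>"
  by (simp add: shiftn_def algebra_simps)

lemma shiftn_0 [simp]: "shiftn 0 \<theta> = \<theta>"
  by (simp add: shiftn_def)

lemma lambda0_shiftn_transpose_seq:
  assumes "positive_seq \<alpha>"
  shows "lambda0 (shiftn n (transpose_seq \<alpha>)) = lambda0 (shiftn (- n) \<alpha>)"
proof -
  have "(\<lambda>k. shiftn n (transpose_seq \<alpha>) (int k + 1)) = (\<lambda>k. shiftn (- n) \<alpha> (- int k - 1))"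
    "(\<lambda>k. shiftn n (transpose_seq \<alpha>) (- int k - 1)) = (\<lambda>k. shiftn (- n) \<alpha> (int k + 1))"
    unfolding shiftn_def transpose_seq_def by (rule ext, rule arg_cong[where f = \<alpha>], linarith)+
  then show ?thesis
    unfolding lambda0_eq_cfrac0[OF positive_seq_shiftn[OF positive_seq_transpose_seq[OF assms]]]
      lambda0_eq_cfrac0[OF positive_seq_shiftn[OF assms]]
    by (simp add: shiftn_def transpose_seq_def)
qed

lemma lambda0_le_markov: "ereal (lambda0 (shiftn n \<theta>)) \<le> markov \<theta>"
  unfolding markov_def by (rule SUP_upper) simp

lemma lambda0_shiftn_le:
  assumes "markov \<theta> \<le> ereal b"
  shows "lambda0 (shiftn n \<theta>) \<le> b"
proof -
  have "ereal (lambda0 (shiftn n \<theta>)) \<le> ereal b"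
    using lambda0_le_markov assms by (rule order_trans)
  then show ?thesis
    by simp
qed

lemma markov_transpose_seq:
  assumes "positive_seq \<alpha>"
  shows "markov (transpose_seq \<alpha>) = markov \<alpha>"
proof -
  have "range (\<lambda>n. g (- n)) = range g" for g :: "int \<Rightarrow> ereal"
  proof
    show "range g \<subseteq> range (\<lambda>n. g (- n))"
      using rangeI[of "\<lambda>n. g (- n)"] by (metis image_subsetI minus_minus)
  qed auto
  from this[of "\<lambda>n. ereal (lambda0 (shiftn n \<alpha>))"] show ?thesis
    unfolding markov_def lambda0_shiftn_transpose_seq[OF assms] by simp
qed

lemma limsup_ereal_eqI:
  fixes f :: "nat \<Rightarrow> real" and r :: "nat \<Rightarrow> nat"
  assumes le: "\<And>e. 0 < e \<Longrightarrow> \<forall>\<^sub>F n in sequentially. f n \<le> l + e"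
    and "strict_mono r" and "(\<lambda>i. f (r i)) \<longlonglongrightarrow> l"
  shows "limsup (\<lambda>n. ereal (f n)) = ereal l"
proof (rule antisym)
  show "limsup (\<lambda>n. ereal (f n)) \<le> ereal l"
    unfolding Limsup_le_iff
  proof (intro allI impI)
    fix y :: ereal
    assume "ereal l < y"
    then obtain z where z: "l < z" "ereal z < y"
      using ereal_dense2 by fastforce
    have "\<forall>\<^sub>F n in sequentially. f n \<le> l + (z - l) / 2"
      using z(1) by (intro le) simp
    moreover have "f n < z" if "f n \<le> l + (z - l) / 2" for n
      using that z(1) by (simp add: field_simps)
    ultimately have "\<forall>\<^sub>F n in sequentially. f n < z"
      by (rule eventually_mono)
    moreover have "ereal (f n) < y" if "f n < z" for n
      using less_trans[OF _ z(2)] that by simp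
    ultimately show "\<forall>\<^sub>F n in sequentially. ereal (f n) < y"
      by (rule eventually_mono)
  qed
  have "limsup ((\<lambda>n. ereal (f n)) \<circ> r) = ereal l"
    using assms(3) by (intro lim_imp_Limsup) (auto simp: o_def intro: tendsto_ereal)
  then show "ereal l \<le> limsup (\<lambda>n. ereal (f n))"
    using limsup_subseq_mono[OF assms(2), of "\<lambda>n. ereal (f n)"] by simp
qed

section \<open>Splicing sequences with overlapping windows\<close>

lemma strict_mono_int_ge:
  fixes u :: "nat \<Rightarrow> int"
  assumes "strict_mono u"
  shows "u 0 + int j \<le> u j"
proof (induction j)
  case (Suc j)
  then show ?case
    using strict_monoD[OF assms, of j "Suc j"] by simp
qed simp

definition splice_index :: "(nat \<Rightarrow> int) \<Rightarrow> int \<Rightarrow> nat" where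
  "splice_index u t = (LEAST j. t < u (Suc j))"

text \<open>splice \<psi> u follows \<psi> j on [u j, u (Suc j)), and \<psi> 0 left of u 0.\<close>

definition splice :: "(nat \<Rightarrow> bseq) \<Rightarrow> (nat \<Rightarrow> int) \<Rightarrow> bseq" where
  "splice \<psi> u t = \<psi> (splice_index u t) t"

lemma splice_index_eq:
  assumes "strict_mono u" "u j \<le> t" "t < u (Suc j)"
  shows "splice_index u t = j"
  unfolding splice_index_def
proof (rule Least_equality)
  fix i
  assume "t < u (Suc i)"
  then show "j \<le> i"
    using assms strict_mono_less_eq[OF assms(1), of "Suc i" j] by linarith
qed (use assms in simp)

lemma splice_index_bounds:
  assumes "strict_mono u" "u 0 \<le> t"
  shows "u (splice_index u t) \<le> t" "t < u (Suc (splice_index u t))"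
proof -
  have "t < u (Suc (nat (t - u 0)))"
    using strict_mono_int_ge[OF assms(1), of "Suc (nat (t - u 0))"] assms(2) by linarith
  then show upper: "t < u (Suc (splice_index u t))"
    unfolding splice_index_def by (rule LeastI)
  show "u (splice_index u t) \<le> t"
  proof (cases "splice_index u t")
    case (Suc i)
    then have "\<not> t < u (Suc i)"
      unfolding splice_index_def by (metis lessI not_less_Least)
    then show ?thesis
      using Suc by simp
  qed (use assms in simp)
qed

locale overlapping_pieces =
  fixes \<psi> :: "nat \<Rightarrow> bseq" and u :: "nat \<Rightarrow> int" and w :: "nat \<Rightarrow> nat"
  assumes positive_pieces: "\<And>j. positive_seq (\<psi> j)"
    and gap: "\<And>j. u j + int (w j) < u (Suc j)"
    and mono_w: "mono w"
    and agree: "\<And>j t. \<bar>t - u (Suc j)\<bar> \<le> int (w j) \<Longrightarrow> \<psi> j t = \<psi> (Suc j) t"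
begin

lemma strict_mono_u: "strict_mono u"
  unfolding strict_mono_Suc_iff
proof
  fix j
  show "u j < u (Suc j)"
    using gap[of j] by linarith
qed

lemma positive_splice: "positive_seq (splice \<psi> u)"
  using positive_pieces by (simp add: positive_seq_def splice_def)

lemma splice_window:
  assumes "u (Suc i) \<le> n" "n < u (Suc (Suc i))" "\<bar>t - n\<bar> \<le> int (w i)"
  shows "splice \<psi> u t = \<psi> (Suc i) t"
proof -
  have w: "w i \<le> w (Suc i)" "w i \<le> w (Suc (Suc i))"
    using mono_w by (simp_all add: monoD)
  consider "t < u (Suc i)" | "u (Suc i) \<le> t" "t < u (Suc (Suc i))" | "u (Suc (Suc i)) \<le> t"
    by linarith
  then show ?thesis
  proof cases
    case 1
    moreover have "u i \<le> t"
      using gap[of i] assms(1,3) 1 unfolding abs_le_iff by linarith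
    ultimately have "splice_index u t = i"
      by (intro splice_index_eq strict_mono_u)
    moreover have "\<bar>t - u (Suc i)\<bar> \<le> int (w i)"
      using 1 assms unfolding abs_le_iff by linarith
    ultimately show ?thesis
      by (simp add: splice_def agree)
  next
    case 2
    then show ?thesis
      by (simp add: splice_def splice_index_eq[OF strict_mono_u])
  next
    case 3
    moreover have "t < u (Suc (Suc (Suc i)))"
      using gap[of "Suc (Suc i)"] assms(2,3) w unfolding abs_le_iff by linarith
    ultimately have "splice_index u t = Suc (Suc i)"
      by (intro splice_index_eq strict_mono_u)
    moreover have "\<bar>t - u (Suc (Suc i))\<bar> \<le> int (w (Suc i))"
      using 3 assms w unfolding abs_le_iff by linarith
    ultimately show ?thesis
      by (simp add: splice_def agree)
  qed
qed

lemma lambda0_splice_close: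
  assumes "u (Suc i) \<le> n" "n < u (Suc (Suc i))"
  shows "\<bar>lambda0 (shiftn n (splice \<psi> u)) - lambda0 (shiftn n (\<psi> (Suc i)))\<bar> \<le> 4 * (1/2) ^ w i"
  using splice_window[OF assms] by (intro lambda0_shiftn_close positive_splice positive_pieces) simp

lemma lambda0_splice_le:
  assumes bound: "\<And>j t. lambda0 (shiftn t (\<psi> j)) \<le> l + (1/2) ^ w j"
    and "u (Suc i) \<le> n"
  shows "lambda0 (shiftn n (splice \<psi> u)) \<le> l + 5 * (1/2) ^ w i"
proof -
  define j where "j = splice_index u n"
  have "u 0 \<le> n"
    using assms(2) strict_mono_less_eq[OF strict_mono_u, of 0 "Suc i"] by simp
  then have j: "u j \<le> n" "n < u (Suc j)"
    using splice_index_bounds[OF strict_mono_u] by (simp_all add: j_def)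
  have "Suc i \<le> j"
    using j assms(2) strict_mono_less_eq[OF strict_mono_u, of "Suc j" "Suc i"] by linarith
  then obtain i' where i': "j = Suc i'" "i \<le> i'"
    using Suc_le_D by auto
  have "w i \<le> w j" "w i \<le> w i'"
    using i' mono_w by (simp_all add: monoD)
  then have "(1/2::real) ^ w j \<le> (1/2) ^ w i" "(1/2::real) ^ w i' \<le> (1/2) ^ w i"
    by (simp_all add: power_decreasing)
  moreover have "\<bar>lambda0 (shiftn n (splice \<psi> u)) - lambda0 (shiftn n (\<psi> j))\<bar> \<le> 4 * (1/2) ^ w i'"
    using lambda0_splice_close j unfolding i'(1) by blast
  ultimately show ?thesis
    using bound[of n j] by linarith
qed

end

section \<open>Approximants of gamma and bridges between them\<close>

locale right_approximants =
  fixes \<gamma> :: bseq and P \<beta> :: "nat \<Rightarrow> bseq" and c :: "nat \<Rightarrow> int"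
  assumes positive_P: "\<And>k. positive_seq (P k)"
    and P_center: "\<And>k n. n \<le> int k \<Longrightarrow> P k n = \<gamma> n"
    and P_tail: "\<And>k n. c k < n \<Longrightarrow> P k n = \<beta> k (n - c k)"
    and c_ge: "\<And>k. int k \<le> c k"
    and markov_P: "\<And>k. markov (P k) \<le> ereal (lambda0 \<gamma> + (1/2) ^ k)"

locale left_approximants =
  fixes \<gamma> :: bseq and N \<beta>' :: "nat \<Rightarrow> bseq" and c' :: "nat \<Rightarrow> int"
  assumes positive_N: "\<And>k. positive_seq (N k)"
    and N_center: "\<And>k n. - int k \<le> n \<Longrightarrow> N k n = \<gamma> n"
    and N_tail: "\<And>k n. n < - c' k \<Longrightarrow> N k n = \<beta>' k (n + c' k)"
    and c'_ge: "\<And>k. int k \<le> c' k"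
    and markov_N: "\<And>k. markov (N k) \<le> ereal (lambda0 \<gamma> + (1/2) ^ k)"

locale bridges =
  fixes \<beta> \<beta>' J :: "nat \<Rightarrow> bseq" and p :: "nat \<Rightarrow> int"
  assumes J_head: "\<And>k t. 0 \<le> t \<Longrightarrow> t \<le> 2 * int k \<Longrightarrow> J k t = \<beta> k (t + 1)"
    and J_end: "\<And>k t. 0 \<le> t \<Longrightarrow> t \<le> 2 * int k \<Longrightarrow>
      J k (p k + t) = \<beta>' (Suc k) (t - 2 * int k - 1)"
    and p_gt: "\<And>k. int k < p k"

lemma sft_positive:
  assumes "sft S" "\<theta> \<in> S"
  shows "positive_seq \<theta>"
proof -
  obtain N W where N: "1 \<le> N" and W: "\<forall>w\<in>W. \<forall>c\<in>set w. 1 \<le> c"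
    and S: "S = {\<theta>. \<forall>n::int. map (\<lambda>i. \<theta> (n + int i)) [0..<N] \<in> W}"
    using assms(1) unfolding sft_def by blast
  show ?thesis
    unfolding positive_seq_def
  proof
    fix n
    have "map (\<lambda>i. \<theta> (n + int i)) [0..<N] \<in> W"
      using assms(2) S by blast
    moreover have "\<theta> n \<in> set (map (\<lambda>i. \<theta> (n + int i)) [0..<N])"
      using N by (auto simp: image_iff intro: bexI[where x = 0])
    ultimately show "1 \<le> \<theta> n"
      using W by blast
  qed
qed

lemma symmetric_shift_reverse:
  assumes "symmetric_shift S" "\<forall>\<theta>\<in>S. positive_seq \<theta>" "\<theta> \<in> S"
  obtains \<theta>' where "\<theta>' \<in> S" "\<And>i. \<theta> (int i) = \<theta>' (- int i)"
proof -
  have "cfrac0 (\<lambda>k. \<theta> (int k)) \<in> Kplus S"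
    unfolding Kplus_def using assms(3) by blast
  then obtain \<theta>' where \<theta>': "\<theta>' \<in> S" "cfrac0 (\<lambda>k. \<theta> (int k)) = cfrac0 (\<lambda>k. \<theta>' (- int k))"
    using assms(1) unfolding symmetric_shift_def Kminus_def by auto
  then have "(\<lambda>k. \<theta> (int k)) = (\<lambda>k. \<theta>' (- int k))"
    using assms(2,3) by (intro cfrac0_inj positive_seq_pos_quotients) auto
  then show ?thesis
    using that \<theta>'(1) by (simp add: fun_eq_iff)
qed

lemma positive_seq_glue:
  assumes "positive_seq \<alpha>" "\<forall>c\<in>set \<tau>. 1 \<le> c" "\<And>i. 1 \<le> \<upsilon> i"
  shows "positive_seq (glue \<alpha> k \<tau> \<upsilon>)"
  unfolding positive_seq_def
proof
  fix n
  have "\<tau> ! nat (n - int k - 1) \<in> set \<tau>" if "int k < n" "n \<le> int k + int (length \<tau>)"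
    using that by (intro nth_mem) linarith
  then show "1 \<le> glue \<alpha> k \<tau> \<upsilon> n"
    using assms by (auto simp: glue_def positive_seq_def)
qed

lemma connects_pos_approximants:
  assumes "connects_pos \<alpha> S" "positive_seq \<alpha>" "markov \<alpha> = ereal (lambda0 \<alpha>)"
    "\<forall>\<beta>\<in>S. positive_seq \<beta>"
  obtains P \<beta> c where "right_approximants \<alpha> P \<beta> c" "\<And>k. \<beta> k \<in> S"
proof -
  have "\<exists>P \<beta> c. positive_seq P \<and> \<beta> \<in> S \<and> int k \<le> c \<and> (\<forall>n \<le> int k. P n = \<alpha> n)
      \<and> (\<forall>n > c. P n = \<beta> (n - c)) \<and> markov P \<le> ereal (lambda0 \<alpha> + (1/2) ^ k)" for k
  proof -
    obtain \<tau> \<upsilon> where \<tau>: "\<forall>c\<in>set \<tau>. 1 \<le> c" and "\<upsilon> \<in> Sigma_plus S"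
      and markov: "markov (glue \<alpha> k \<tau> \<upsilon>) < markov \<alpha> + ereal ((1/2) ^ k)"
      using assms(1) unfolding connects_pos_def by blast
    then obtain \<beta> where \<beta>: "\<beta> \<in> S" "\<upsilon> = (\<lambda>i. \<beta> (int i + 1))"
      unfolding Sigma_plus_def by blast
    have "positive_seq (glue \<alpha> k \<tau> \<upsilon>)"
      using assms(2,4) \<tau> \<beta> by (intro positive_seq_glue) (auto simp: positive_seq_def)
    moreover have "glue \<alpha> k \<tau> \<upsilon> n = \<beta> (n - (int k + int (length \<tau>)))"
      if "int k + int (length \<tau>) < n" for n
      using that \<beta>(2) by (simp add: glue_def algebra_simps)
    moreover have "markov (glue \<alpha> k \<tau> \<upsilon>) \<le> ereal (lambda0 \<alpha> + (1/2) ^ k)"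
      using markov assms(3) by simp
    ultimately show ?thesis
      using \<beta>(1)
      by (intro exI[of _ "glue \<alpha> k \<tau> \<upsilon>"] exI[of _ \<beta>] exI[of _ "int k + int (length \<tau>)"])
        (auto simp: glue_def)
  qed
  then obtain P \<beta> c where "\<And>k. positive_seq (P k) \<and> \<beta> k \<in> S \<and> int k \<le> c k
      \<and> (\<forall>n \<le> int k. P k n = \<alpha> n) \<and> (\<forall>n > c k. P k n = \<beta> k (n - c k))
      \<and> markov (P k) \<le> ereal (lambda0 \<alpha> + (1/2) ^ k)"
    by metis
  then show ?thesis
    using that[of P \<beta> c] by (simp add: right_approximants_def)
qed

lemma connects_neg_approximants:
  assumes "connects_neg \<alpha> S" "symmetric_shift S" "positive_seq \<alpha>"
    "markov \<alpha> = ereal (lambda0 \<alpha>)" "\<forall>\<beta>\<in>S. positive_seq \<beta>"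
  obtains N \<beta> c where "left_approximants \<alpha> N \<beta> c" "\<And>k. \<beta> k \<in> S"
proof -
  have "markov (transpose_seq \<alpha>) = ereal (lambda0 (transpose_seq \<alpha>))"
    using lambda0_shiftn_transpose_seq[OF assms(3), of 0] assms(4)
    by (simp add: markov_transpose_seq assms(3))
  then obtain P \<beta>\<^sub>1 c where P: "right_approximants (transpose_seq \<alpha>) P \<beta>\<^sub>1 c" "\<And>k. \<beta>\<^sub>1 k \<in> S"
    using connects_pos_approximants[OF assms(1)[unfolded connects_neg_def]
        positive_seq_transpose_seq[OF assms(3)] _ assms(5)] by blast
  interpret right_approximants "transpose_seq \<alpha>" P \<beta>\<^sub>1 c
    by (fact P(1))
  have "\<exists>\<beta>. \<beta> \<in> S \<and> (\<forall>i. \<beta>\<^sub>1 k (int i) = \<beta> (- int i))" for k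
    using symmetric_shift_reverse[OF assms(2,5) P(2)] by metis
  then obtain \<beta> where \<beta>: "\<And>k. \<beta> k \<in> S" "\<And>k i. \<beta>\<^sub>1 k (int i) = \<beta> k (- int i)"
    by metis
  have "left_approximants \<alpha> (\<lambda>k. transpose_seq (P k)) \<beta> c"
  proof
    fix k n
    show "positive_seq (transpose_seq (P k))"
      using positive_P by (rule positive_seq_transpose_seq)
    show "- int k \<le> n \<Longrightarrow> transpose_seq (P k) n = \<alpha> n"
      using P_center[of "- n" k] by (simp add: transpose_seq_def)
    show "n < - c k \<Longrightarrow> transpose_seq (P k) n = \<beta> k (n + c k)"
      using P_tail[of k "- n"] \<beta>(2)[of k "nat (- n - c k)"] by (simp add: transpose_seq_def add.commute)
    show "markov (transpose_seq (P k)) \<le> ereal (lambda0 \<alpha> + (1/2) ^ k)"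
      using markov_P[of k] lambda0_shiftn_transpose_seq[OF assms(3), of 0]
      by (simp add: markov_transpose_seq positive_P)
  qed (use c_ge in auto)
  then show ?thesis
    using that \<beta>(1) by blast
qed

lemma transitive_shift_bridges:
  assumes "transitive_shift S" "\<And>k. \<beta> k \<in> S" "\<And>k. \<beta>' k \<in> S"
  obtains J p where "bridges \<beta> \<beta>' J p" "\<And>k. J k \<in> S"
proof -
  have "\<exists>\<theta> q. \<theta> \<in> S \<and> int k < q \<and> (\<forall>t. 0 \<le> t \<and> t \<le> 2 * int k \<longrightarrow> \<theta> t = \<beta> k (t + 1))
      \<and> (\<forall>t. 0 \<le> t \<and> t \<le> 2 * int k \<longrightarrow> \<theta> (q + t) = \<beta>' (Suc k) (t - 2 * int k - 1))" for k
  proof -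
    have "\<exists>\<theta>\<in>S. \<exists>q. int (Suc (2 * k)) \<le> q \<and>
        (\<forall>i<Suc (2 * k). \<theta> (int i) = \<beta> k (1 + int i)) \<and>
        (\<forall>i<Suc (2 * k). \<theta> (q + int i) = \<beta>' (Suc k) (- 2 * int k - 1 + int i))"
      using assms(1) assms(2)[of k] assms(3)[of "Suc k"] unfolding transitive_shift_def by blast
    then obtain \<theta> q where \<theta>: "\<theta> \<in> S" "int (Suc (2 * k)) \<le> q"
      "\<And>i. i < Suc (2 * k) \<Longrightarrow> \<theta> (int i) = \<beta> k (1 + int i)"
      "\<And>i. i < Suc (2 * k) \<Longrightarrow> \<theta> (q + int i) = \<beta>' (Suc k) (- 2 * int k - 1 + int i)"
      by blast
    have "\<theta> t = \<beta> k (t + 1) \<and> \<theta> (q + t) = \<beta>' (Suc k) (t - 2 * int k - 1)"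
      if "0 \<le> t" "t \<le> 2 * int k" for t
    proof -
      have "nat t < Suc (2 * k)" "int (nat t) = t"
        using that by simp_all
      then show ?thesis
        using \<theta>(3,4)[of "nat t"] by (simp add: algebra_simps)
    qed
    then show ?thesis
      using \<theta>(1,2) by (intro exI[of _ \<theta>] exI[of _ q]) auto
  qed
  then obtain J p where "\<And>k. J k \<in> S \<and> int k < p k
      \<and> (\<forall>t. 0 \<le> t \<and> t \<le> 2 * int k \<longrightarrow> J k t = \<beta> k (t + 1))
      \<and> (\<forall>t. 0 \<le> t \<and> t \<le> 2 * int k \<longrightarrow> J k (p k + t) = \<beta>' (Suc k) (t - 2 * int k - 1))"
    by metis
  then show ?thesis
    using that[of J p] by (simp add: bridges_def)
qed

section \<open>A sequence with Lagrange value lambda0 gamma\<close>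

definition interleave3 :: "(nat \<Rightarrow> 'a) \<Rightarrow> (nat \<Rightarrow> 'a) \<Rightarrow> (nat \<Rightarrow> 'a) \<Rightarrow> nat \<Rightarrow> 'a" where
  "interleave3 f g h j =
    (if j mod 3 = 0 then f (j div 3) else if j mod 3 = 1 then g (j div 3) else h (j div 3))"

lemma div_mod_3_simps [simp]:
  "Suc (3 * k) div 3 = k" "Suc (3 * k) mod 3 = 1"
  "Suc (Suc (3 * k)) div 3 = k" "Suc (Suc (3 * k)) mod 3 = 2"
  by presburger+

lemma interleave3_simps [simp]:
  "interleave3 f g h (3 * k) = f k"
  "interleave3 f g h (Suc (3 * k)) = g k"
  "interleave3 f g h (Suc (Suc (3 * k))) = h k"
  by (simp_all add: interleave3_def)

lemma nat_cases_mod3: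
  fixes j :: nat
  obtains k where "j = 3 * k" | k where "j = Suc (3 * k)" | k where "j = Suc (Suc (3 * k))"
proof -
  have "j mod 3 = 0 \<or> j mod 3 = 1 \<or> j mod 3 = 2"
    by arith
  then show ?thesis
    using that div_mult_mod_eq[of j 3] by (metis Suc_eq_plus1 add_2_eq_Suc' add.right_neutral mult.commute)
qed

locale lagrange_construction =
  right_approximants \<gamma> P \<beta> c + left_approximants \<gamma> N \<beta>' c' + bridges \<beta> \<beta>' J p
  for \<gamma> :: bseq and P N J \<beta> \<beta>' :: "nat \<Rightarrow> bseq" and c c' p :: "nat \<Rightarrow> int" +
  assumes positive_\<gamma>: "positive_seq \<gamma>" and positive_J: "\<And>k. positive_seq (J k)"
    and markov_J: "\<And>k. markov (J k) \<le> ereal (lambda0 \<gamma>)"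
begin

lemma N_eq_P: "\<bar>n\<bar> \<le> int k \<Longrightarrow> N k n = P k n"
  using N_center P_center by (simp add: abs_le_iff)

lemma P_eq_J: "\<bar>n - (c k + int k + 1)\<bar> \<le> int k \<Longrightarrow> P k n = J k (n - c k - 1)"
  using P_tail[of k n] J_head[of "n - c k - 1" k] by (simp add: abs_le_iff)

lemma J_eq_N:
  "\<bar>n - (p k + int k)\<bar> \<le> int k \<Longrightarrow> J k n = N (Suc k) (n - p k - c' (Suc k) - 2 * int k - 1)"
  using J_end[of "n - p k" k] N_tail[of "n - p k - c' (Suc k) - 2 * int k - 1" "Suc k"]
  by (simp add: abs_le_iff algebra_simps)

text \<open>Pieces 3k, 3k+1, 3k+2 are N, P, J of step k, translated so that the centre of
  \<gamma> sits at offset k; each cut lies in the middle of an overlap of radius Suc k of two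
  consecutive pieces. Step k uses the data of index Suc k, so that the tail offset c' (Suc k)
  is positive.\<close>
definition offset :: "nat \<Rightarrow> int" where
  "offset k = (\<Sum>i<k. c (Suc i) + p (Suc i) + c' (Suc (Suc i)) + 2 * int i + 4)"

definition piece :: "nat \<Rightarrow> bseq" where
  "piece = interleave3 (\<lambda>k. shiftn (- offset k) (N (Suc k))) (\<lambda>k. shiftn (- offset k) (P (Suc k)))
     (\<lambda>k. shiftn (- (offset k + c (Suc k) + 1)) (J (Suc k)))"

definition cut :: "nat \<Rightarrow> int" where
  "cut = interleave3 (\<lambda>k. offset k - c' (Suc k) - int k - 1) offset
     (\<lambda>k. offset k + c (Suc k) + int k + 2)"

lemma offset_Suc: "offset (Suc k) = offset k + c (Suc k) + p (Suc k) + c' (Suc (Suc k)) + 2 * int k + 4"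
  by (simp add: offset_def)

lemma strict_mono_offset: "strict_mono offset"
  unfolding strict_mono_Suc_iff
proof
  fix k
  show "offset k < offset (Suc k)"
    using c_ge[of "Suc k"] c'_ge[of "Suc (Suc k)"] p_gt[of "Suc k"] by (simp add: offset_Suc)
qed

lemma offset_nonneg: "0 \<le> offset k"
  using strict_mono_int_ge[OF strict_mono_offset, of k] by (simp add: offset_def)

lemma piece_simps [simp]:
  "piece (3 * k) = shiftn (- offset k) (N (Suc k))"
  "piece (Suc (3 * k)) = shiftn (- offset k) (P (Suc k))"
  "piece (Suc (Suc (3 * k))) = shiftn (- (offset k + c (Suc k) + 1)) (J (Suc k))"
  "piece (Suc (Suc (Suc (3 * k)))) = shiftn (- offset (Suc k)) (N (Suc (Suc k)))"
proof -
  have "Suc (Suc (Suc (3 * k))) = 3 * Suc k"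
    by simp
  then show "piece (Suc (Suc (Suc (3 * k)))) = shiftn (- offset (Suc k)) (N (Suc (Suc k)))"
    by (simp only: piece_def interleave3_simps)
qed (simp_all add: piece_def)

lemma cut_simps [simp]:
  "cut (3 * k) = offset k - c' (Suc k) - int k - 1"
  "cut (Suc (3 * k)) = offset k"
  "cut (Suc (Suc (3 * k))) = offset k + c (Suc k) + int k + 2"
  "cut (Suc (Suc (Suc (3 * k)))) = offset (Suc k) - c' (Suc (Suc k)) - int k - 2"
proof -
  have "Suc (Suc (Suc (3 * k))) = 3 * Suc k"
    by simp
  then show "cut (Suc (Suc (Suc (3 * k)))) = offset (Suc k) - c' (Suc (Suc k)) - int k - 2"
    by (simp only: cut_def interleave3_simps)
qed (simp_all add: cut_def)

sublocale overlapping_pieces piece cut "\<lambda>j. Suc (j div 3)"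
proof
  fix j
  show "positive_seq (piece j)"
    by (cases j rule: nat_cases_mod3) (simp_all add: positive_N positive_P positive_J positive_seq_shiftn)
  show "cut j + int (Suc (j div 3)) < cut (Suc j)"
  proof (cases j rule: nat_cases_mod3)
    case (1 k)
    then show ?thesis
      using c'_ge[of "Suc k"] by simp
  next
    case (2 k)
    then show ?thesis
      using c_ge[of "Suc k"] by simp
  next
    case (3 k)
    then show ?thesis
      using p_gt[of "Suc k"] by (simp add: offset_Suc)
  qed
next
  show "mono (\<lambda>j. Suc (j div 3))"
    by (simp add: mono_def div_le_mono)
next
  fix j t
  assume t: "\<bar>t - cut (Suc j)\<bar> \<le> int (Suc (j div 3))"
  show "piece j t = piece (Suc j) t"
  proof (cases j rule: nat_cases_mod3)
    case (1 k)
    then show ?thesis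
      using t N_eq_P[of "t - offset k" "Suc k"] by (simp add: shiftn_def)
  next
    case (2 k)
    then show ?thesis
      using t P_eq_J[of "t - offset k" "Suc k"] by (simp add: shiftn_def) (simp add: algebra_simps)
  next
    case (3 k)
    then show ?thesis
      using t J_eq_N[of "t - (offset k + c (Suc k) + 1)" "Suc k"]
      by (simp add: shiftn_def offset_Suc) (simp add: algebra_simps)
  qed
qed

lemma lambda0_piece_le: "lambda0 (shiftn t (piece j)) \<le> lambda0 \<gamma> + (1/2) ^ Suc (j div 3)"
proof (cases j rule: nat_cases_mod3)
  case (1 k)
  then show ?thesis
    using lambda0_shiftn_le[OF markov_N[of "Suc k"]] by simp
next
  case (2 k)
  then show ?thesis
    using lambda0_shiftn_le[OF markov_P[of "Suc k"]] by simp
next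
  case (3 k)
  then have "lambda0 (shiftn t (piece j)) \<le> lambda0 \<gamma>"
    using lambda0_shiftn_le[OF markov_J] by simp
  then show ?thesis
    by (simp add: add_increasing2)
qed

lemma lambda0_splice_offset_close:
  "\<bar>lambda0 (shiftn (offset k) (splice piece cut)) - lambda0 \<gamma>\<bar> \<le> (1/2) ^ k * 8"
proof -
  have "\<bar>lambda0 (shiftn (offset k) (splice piece cut)) - lambda0 (P (Suc k))\<bar> \<le> 4 * (1/2) ^ Suc k"
    using lambda0_splice_close[of "3 * k" "offset k"] gap[of "Suc (3 * k)"] by simp
  moreover have "\<bar>lambda0 (P (Suc k)) - lambda0 \<gamma>\<bar> \<le> 4 * (1/2) ^ Suc k"
    using P_center by (intro lambda0_close positive_P positive_\<gamma>) (simp add: abs_le_iff)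
  moreover have "(1/2::real) ^ Suc k \<le> (1/2) ^ k"
    by simp
  ultimately show ?thesis
    unfolding abs_le_iff by linarith
qed

lemma lagrange_splice: "lagrange (splice piece cut) = ereal (lambda0 \<gamma>)"
proof -
  define f where "f n = lambda0 (shiftn (int n) (splice piece cut))" for n
  have "\<forall>\<^sub>F n in sequentially. f n \<le> lambda0 \<gamma> + e" if e: "0 < e" for e
  proof -
    obtain K where K: "5 * (1/2) ^ K < e"
      using eventually_half_pow_less[OF e, of 5] by (auto simp: eventually_sequentially)
    have "f n \<le> lambda0 \<gamma> + e" if "nat (offset K) \<le> n" for n
    proof -
      have "cut (Suc (3 * K)) \<le> int n"
        using that offset_nonneg[of K] by simp
      then have "f n \<le> lambda0 \<gamma> + 5 * (1/2) ^ Suc K"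
        unfolding f_def using lambda0_splice_le[OF lambda0_piece_le, where i = "3 * K"] by simp
      moreover have "(1/2::real) ^ Suc K \<le> (1/2) ^ K"
        by simp
      ultimately show ?thesis
        using K by linarith
    qed
    then show ?thesis
      by (auto simp: eventually_sequentially)
  qed
  moreover have "strict_mono (\<lambda>k. nat (offset k))"
  proof (rule strict_monoI)
    fix x y :: nat
    assume "x < y"
    then show "nat (offset x) < nat (offset y)"
      using strict_monoD[OF strict_mono_offset] offset_nonneg[of x] by fastforce
  qed
  moreover have "(\<lambda>k. f (nat (offset k))) \<longlonglongrightarrow> lambda0 \<gamma>"
  proof -
    have "(\<lambda>k. (1/2::real) ^ k) \<longlonglongrightarrow> 0"
      by (intro LIMSEQ_power_zero) simp
    then have "(\<lambda>k. f (nat (offset k)) - lambda0 \<gamma>) \<longlonglongrightarrow> 0"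
      by (rule tendsto_0_le[where K = 8]) (simp add: f_def offset_nonneg lambda0_splice_offset_close)
    then show ?thesis
      by (simp add: LIM_zero_iff)
  qed
  ultimately have "limsup (\<lambda>n. ereal (f n)) = ereal (lambda0 \<gamma>)"
    by (rule limsup_ereal_eqI)
  then show ?thesis
    by (simp add: lagrange_def f_def)
qed

lemma lambda0_mem_lagrange_spectrum: "lambda0 \<gamma> \<in> lagrange_spectrum"
  using lagrange_splice positive_splice unfolding lagrange_spectrum_def by blast

end

theorem lemma3p4:
  fixes B C :: "bseq set" and x :: real and \<gamma> :: bseq
  assumes "sft B" and "sft C" and "B \<subseteq> C"
    and "transitive_shift B" and "transitive_shift C"
    and "symmetric_shift B" and "symmetric_shift C"
    and "\<forall>\<beta>\<in>B. markov \<beta> \<le> ereal x"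
    and "\<gamma> \<in> C"
    and "markov \<gamma> = ereal (lambda0 \<gamma>)"
    and "lambda0 \<gamma> > x"
    and "connects_pos \<gamma> B" and "connects_neg \<gamma> B"
  shows "lambda0 \<gamma> \<in> lagrange_spectrum"
proof -
  have positive_B: "\<forall>\<beta>\<in>B. positive_seq \<beta>"
    using \<open>sft B\<close> sft_positive by blast
  have positive_\<gamma>: "positive_seq \<gamma>"
    using \<open>sft C\<close> \<open>\<gamma> \<in> C\<close> by (rule sft_positive)
  obtain P \<beta> c where P: "right_approximants \<gamma> P \<beta> c" "\<And>k. \<beta> k \<in> B"
    by (rule connects_pos_approximants[OF \<open>connects_pos \<gamma> B\<close> positive_\<gamma>
        \<open>markov \<gamma> = ereal (lambda0 \<gamma>)\<close> positive_B]) (rule that)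
  obtain N \<beta>' c' where N: "left_approximants \<gamma> N \<beta>' c'" "\<And>k. \<beta>' k \<in> B"
    by (rule connects_neg_approximants[OF \<open>connects_neg \<gamma> B\<close> \<open>symmetric_shift B\<close> positive_\<gamma>
        \<open>markov \<gamma> = ereal (lambda0 \<gamma>)\<close> positive_B]) (rule that)
  obtain J p where J: "bridges \<beta> \<beta>' J p" "\<And>k. J k \<in> B"
    by (rule transitive_shift_bridges[OF \<open>transitive_shift B\<close> P(2) N(2)]) (rule that)
  have "markov (J k) \<le> ereal (lambda0 \<gamma>)" for k
    using J(2)[of k] \<open>\<forall>\<beta>\<in>B. markov \<beta> \<le> ereal x\<close> \<open>x < lambda0 \<gamma>\<close>
    by (fastforce intro: order_trans[of _ "ereal x"])
  then interpret lagrange_construction \<gamma> P N J \<beta> \<beta>' c c' p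
    using P(1) N(1) J positive_\<gamma> positive_B
    by (intro lagrange_construction.intro lagrange_construction_axioms.intro) auto
  show ?thesis
    by (rule lambda0_mem_lagrange_spectrum)
qed

end
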